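(* Let $H$ be a set with a metric $d$ and $r\ge3$ an integer. Let $\mathcal{Q}$ be a partition of $[r]=\{1,\dots,r\}$ with $|\mathcal{Q}|\ge2$, fix $0\le\alpha<\beta$, and suppose $\underline h\in H^r$ satisfies $d^{\mathcal{Q}}(\underline h)\le\alpha$ and $d_{\mathcal{Q}}(\underline h)\le\beta$. Then there exists a partition $\mathcal{R}$ of $[r]$, strictly coarser than $\mathcal{Q}$, such that $d^{\mathcal{R}}(\underline h)<3\beta$.
   Context: For $\underline h=(h_1,\dots,h_r)\in H^r$ and $I,J\subset[r]$: $d^I(\underline h)=\max\{d(h_i,h_j):i,j\in I\}$, $d_{I,J}(\underline h)=\min\{d(h_i,h_j):i\in I,j\in J\}$. For a partition $\mathcal{Q}$: $d^{\mathcal{Q}}(\underline h)=\max_{I\in\mathcal{Q}}d^I(\underline h)$, $d_{\mathcal{Q}}(\underline h)=\min\{d_{I,J}(\underline h):I\ne J,\ I,J\in\mathcal{Q}\}$. A partition $\mathcal{R}$ is strictly coarser than $\mathcal{Q}$ if every block of $\mathcal{R}$ is a union of blocks of $\mathcal{Q}$ and $\mathcal{R}$ has fewer blocks than $\mathcal{Q}$. *)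

theory Defs
  imports "HOL-Analysis.Analysis" "HOL-Library.Disjoint_Sets"
begin

text \<open>Tuples h in H^r are functions nat => 'a, only indices in {1..r} matter.\<close>

definition diam_idx :: "(nat \<Rightarrow> 'a::metric_space) \<Rightarrow> nat set \<Rightarrow> real" where
  "diam_idx h I = Max {dist (h i) (h j) | i j. i \<in> I \<and> j \<in> I}"

definition sep_idx :: "(nat \<Rightarrow> 'a::metric_space) \<Rightarrow> nat set \<Rightarrow> nat set \<Rightarrow> real" where
  "sep_idx h I J = Min {dist (h i) (h j) | i j. i \<in> I \<and> j \<in> J}"

definition diam_part :: "(nat \<Rightarrow> 'a::metric_space) \<Rightarrow> nat set set \<Rightarrow> real" where
  "diam_part h Q = Max {diam_idx h I | I. I \<in> Q}"

definition sep_part :: "(nat \<Rightarrow> 'a::metric_space) \<Rightarrow> nat set set \<Rightarrow> real" where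
  "sep_part h Q = Min {sep_idx h I J | I J. I \<in> Q \<and> J \<in> Q \<and> I \<noteq> J}"

definition strictly_coarser :: "nat set set \<Rightarrow> nat set set \<Rightarrow> bool" where
  "strictly_coarser R Q \<longleftrightarrow> (\<forall>B\<in>R. \<exists>S\<subseteq>Q. B = \<Union>S) \<and> card R < card Q"

end

theory Submission
  imports Defs
begin

text \<open>Merge two blocks \<open>I\<close>, \<open>J\<close> of \<open>\<Q>\<close> realising the separation \<open>d\<^sub>\<Q>(h) \<le> \<beta>\<close>.
  Every other block keeps diameter at most \<open>\<alpha>\<close>, and by the triangle inequality through the
  closest pair \<open>i \<in> I\<close>, \<open>j \<in> J\<close> the merged block has diameter at most \<open>2\<alpha> + \<beta> < 3\<beta>\<close>.\<close>

lemma finite_dist_pairs: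
  assumes "finite I" "finite J"
  shows "finite {dist (h i) (h j) | i j. i \<in> I \<and> j \<in> J}"
proof -
  have "{dist (h i) (h j) | i j. i \<in> I \<and> j \<in> J} = (\<lambda>(i, j). dist (h i) (h j)) ` (I \<times> J)"
    by auto
  then show ?thesis using assms by simp
qed

lemma dist_le_diam_idx:
  assumes "finite I" "i \<in> I" "j \<in> I"
  shows "dist (h i) (h j) \<le> diam_idx h I"
  unfolding diam_idx_def using assms by (intro Max_ge finite_dist_pairs) auto

lemma diam_idx_leI:
  assumes "finite I" "I \<noteq> {}" "\<And>i j. i \<in> I \<Longrightarrow> j \<in> I \<Longrightarrow> dist (h i) (h j) \<le> c"
  shows "diam_idx h I \<le> c"
proof -
  obtain x where "x \<in> I" using assms(2) by blast
  then have "{dist (h i) (h j) | i j. i \<in> I \<and> j \<in> I} \<noteq> {}" by blast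
  then show ?thesis
    unfolding diam_idx_def using assms(3) finite_dist_pairs[OF assms(1,1)]
    by (subst Max_le_iff) auto
qed

lemma sep_idx_attained:
  assumes "finite I" "finite J" "I \<noteq> {}" "J \<noteq> {}"
  obtains i j where "i \<in> I" "j \<in> J" "dist (h i) (h j) = sep_idx h I J"
proof -
  have "sep_idx h I J \<in> {dist (h i) (h j) | i j. i \<in> I \<and> j \<in> J}"
    unfolding sep_idx_def using assms by (intro Min_in finite_dist_pairs) auto
  then obtain i j where "i \<in> I" "j \<in> J" "sep_idx h I J = dist (h i) (h j)"
    by blast
  then show ?thesis using that by simp
qed

lemma diam_idx_le_diam_part:
  assumes "finite Q" "I \<in> Q"
  shows "diam_idx h I \<le> diam_part h Q"
  unfolding diam_part_def using assms by (intro Max_ge) auto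

lemma diam_part_less:
  assumes "finite Q" "Q \<noteq> {}" "\<And>I. I \<in> Q \<Longrightarrow> diam_idx h I < c"
  shows "diam_part h Q < c"
  unfolding diam_part_def using assms by (subst Max_less_iff) auto

lemma sep_part_attained:
  assumes "finite Q" "card Q \<ge> 2"
  obtains I J where "I \<in> Q" "J \<in> Q" "I \<noteq> J" "sep_part h Q = sep_idx h I J"
proof -
  obtain I0 J0 where "I0 \<in> Q" "J0 \<in> Q" "I0 \<noteq> J0"
    using assms card_le_Suc0_iff_eq[OF assms(1)] by fastforce
  moreover have "{sep_idx h I J | I J. I \<in> Q \<and> J \<in> Q \<and> I \<noteq> J} \<subseteq> (\<lambda>(I, J). sep_idx h I J) ` (Q \<times> Q)"
    by auto
  then have "finite {sep_idx h I J | I J. I \<in> Q \<and> J \<in> Q \<and> I \<noteq> J}"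
    using assms(1) by (simp add: finite_subset)
  ultimately have "sep_part h Q \<in> {sep_idx h I J | I J. I \<in> Q \<and> J \<in> Q \<and> I \<noteq> J}"
    unfolding sep_part_def by (intro Min_in) auto
  then show ?thesis using that by blast
qed

lemma diam_idx_Un_le:
  assumes "finite I" "finite J" "diam_idx h I \<le> a" "diam_idx h J \<le> a"
    and "i \<in> I" "j \<in> J" "dist (h i) (h j) \<le> b"
  shows "diam_idx h (I \<union> J) \<le> 2 * a + b"
proof -
  have across: "dist (h x) (h y) \<le> 2 * a + b" if "x \<in> I" "y \<in> J" for x y
  proof -
    have "dist (h x) (h y) \<le> dist (h x) (h i) + dist (h i) (h j) + dist (h j) (h y)"
      using dist_triangle[of "h x" "h y" "h i"] dist_triangle[of "h i" "h y" "h j"] by linarith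
    moreover have "dist (h x) (h i) \<le> a"
      using dist_le_diam_idx[OF assms(1) that(1) assms(5), of h] assms(3) by linarith
    moreover have "dist (h j) (h y) \<le> a"
      using dist_le_diam_idx[OF assms(2) assms(6) that(2), of h] assms(4) by linarith
    ultimately show ?thesis using assms(7) by linarith
  qed
  have "a \<ge> 0" using dist_le_diam_idx[OF assms(1,5,5), of h] assms(3) by simp
  have "b \<ge> 0" using assms(7) zero_le_dist[of "h i" "h j"] by linarith
  have within: "dist (h x) (h y) \<le> 2 * a + b" if "finite K" "diam_idx h K \<le> a" "x \<in> K" "y \<in> K"
    for K x y
    using dist_le_diam_idx[OF that(1,3,4), of h] that(2) \<open>a \<ge> 0\<close> \<open>b \<ge> 0\<close> by linarith
  show ?thesis
  proof (rule diam_idx_leI)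
    fix x y assume "x \<in> I \<union> J" "y \<in> I \<union> J"
    then show "dist (h x) (h y) \<le> 2 * a + b"
      using within[OF assms(1,3)] within[OF assms(2,4)] across across[of y x]
      by (auto simp: dist_commute)
  qed (use assms(1,2,5) in auto)
qed

lemma partition_on_merge:
  assumes "partition_on A Q" "I \<in> Q" "J \<in> Q"
  shows "partition_on A (insert (I \<union> J) (Q - {I, J}))"
proof (rule partition_onI)
  show "\<Union>(insert (I \<union> J) (Q - {I, J})) = A"
    using partition_onD1[OF assms(1)] assms(2,3) by blast
  show "{} \<notin> insert (I \<union> J) (Q - {I, J})"
    using partition_onD3[OF assms(1)] assms(2) by auto
  have disj: "disjnt K L" if "K \<in> Q" "L \<in> Q" "K \<noteq> L" for K L
    using partition_onD2[OF assms(1)] that by (auto simp: disjoint_def disjnt_def)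
  fix K L
  assume "K \<in> insert (I \<union> J) (Q - {I, J})" "L \<in> insert (I \<union> J) (Q - {I, J})" "K \<noteq> L"
  then consider "K = I \<union> J" "L \<in> Q - {I, J}" | "L = I \<union> J" "K \<in> Q - {I, J}" | "K \<in> Q" "L \<in> Q"
    by blast
  then show "disjnt K L"
  proof cases
    case 1
    then show ?thesis using disj[of I L] disj[of J L] assms(2,3) by auto
  next
    case 2
    then show ?thesis using disj[of K I] disj[of K J] assms(2,3) by auto
  next
    case 3
    then show ?thesis using disj \<open>K \<noteq> L\<close> by blast
  qed
qed

lemma strictly_coarser_merge:
  assumes "finite Q" "I \<in> Q" "J \<in> Q" "I \<noteq> J"
  shows "strictly_coarser (insert (I \<union> J) (Q - {I, J})) Q"
  unfolding strictly_coarser_def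
proof
  show "\<forall>B\<in>insert (I \<union> J) (Q - {I, J}). \<exists>S\<subseteq>Q. B = \<Union>S"
  proof
    fix B assume "B \<in> insert (I \<union> J) (Q - {I, J})"
    then consider "B = I \<union> J" | "B \<in> Q" by blast
    then show "\<exists>S\<subseteq>Q. B = \<Union>S"
    proof cases
      case 1
      then show ?thesis using assms(2,3) by (intro exI[of _ "{I, J}"]) auto
    next
      case 2
      then show ?thesis by (intro exI[of _ "{B}"]) auto
    qed
  qed
  have "card (Q - {I, J}) = card Q - 2"
    using assms by (simp add: card_Diff_subset)
  moreover have "card Q \<ge> 2"
    using assms card_mono[OF assms(1), of "{I, J}"] by auto
  moreover have "card (insert (I \<union> J) (Q - {I, J})) \<le> Suc (card (Q - {I, J}))"
    using assms(1) by (simp add: card_insert_if)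
  ultimately show "card (insert (I \<union> J) (Q - {I, J})) < card Q"
    by linarith
qed

theorem lemma10p1:
  fixes h :: "nat \<Rightarrow> 'a::metric_space" and r :: nat and Q :: "nat set set"
    and \<alpha> \<beta> :: real
  assumes "r \<ge> 3"
    and "partition_on {1..r} Q"
    and "card Q \<ge> 2"
    and "0 \<le> \<alpha>" and "\<alpha> < \<beta>"
    and "diam_part h Q \<le> \<alpha>"
    and "sep_part h Q \<le> \<beta>"
  shows "\<exists>R. partition_on {1..r} R \<and> strictly_coarser R Q \<and> diam_part h R < 3 * \<beta>"
proof -
  have finQ: "finite Q" using finite_elements[OF _ assms(2)] by simp
  have blocks: "finite B" "B \<noteq> {}" "diam_idx h B \<le> \<alpha>" if "B \<in> Q" for B
  proof -
    have "B \<subseteq> {1..r}" using partition_onD1[OF assms(2)] that by blast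
    then show "finite B" by (rule finite_subset) simp
    show "B \<noteq> {}" using partition_onD3[OF assms(2)] that by blast
    show "diam_idx h B \<le> \<alpha>" using diam_idx_le_diam_part[OF finQ that, of h] assms(6) by simp
  qed
  obtain I J where IJ: "I \<in> Q" "J \<in> Q" "I \<noteq> J" "sep_idx h I J \<le> \<beta>"
    using sep_part_attained[OF finQ assms(3), of h] assms(7) by metis
  obtain i j where ij: "i \<in> I" "j \<in> J" "dist (h i) (h j) \<le> \<beta>"
    using sep_idx_attained[OF blocks(1)[OF IJ(1)] blocks(1)[OF IJ(2)]
        blocks(2)[OF IJ(1)] blocks(2)[OF IJ(2)], of h] IJ(4) by metis
  define R where "R = insert (I \<union> J) (Q - {I, J})"
  have "diam_idx h (I \<union> J) \<le> 2 * \<alpha> + \<beta>"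
    using diam_idx_Un_le[OF blocks(1)[OF IJ(1)] blocks(1)[OF IJ(2)]
        blocks(3)[OF IJ(1)] blocks(3)[OF IJ(2)] ij] .
  then have "diam_idx h B < 3 * \<beta>" if "B \<in> R" for B
    using that blocks(3) assms(4,5) unfolding R_def by fastforce
  then have "diam_part h R < 3 * \<beta>"
    using finQ by (intro diam_part_less) (auto simp: R_def)
  then show ?thesis
    using partition_on_merge[OF assms(2) IJ(1,2)] strictly_coarser_merge[OF finQ IJ(1-3)]
    unfolding R_def by blast
qed

end
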